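(* Fix integers $a,b\ge 2$, $\varepsilon>0$, and a family $\mathcal{T}$ of $a$-element multisets with elements in $[b]$. Let $n\to\infty$ and let $m=m(n)$ satisfy $m/n\to\infty$. For each $n$, let $C_M$ be a coloring $[n]\to[b]$ maximizing $p^C(\mathcal{T})$. Then all hypergraphs $H\in\mathcal{H}(a,n,m)$, except for $o\!\left(\binom{\binom{n}{a}}{m}\right)$ of them, satisfy $q(H)\le p^{C_M}(\mathcal{T})\,m\,(1+\varepsilon)$.
   Context: $\mathcal{H}(a,n,m)$ is the family of all $a$-uniform hypergraphs on vertex set $[n]$ with exactly $m$ hyperedges; $|\mathcal{H}(a,n,m)|=\binom{\binom{n}{a}}{m}$. A coloring $C:[n]\to[b]$ is an arbitrary map. For a coloring $C$, $n_j^C$ is the number of vertices of color $j$; the color multiset of a hyperedge $e$ is the multiset of colors $C(v)$, $v\in e$, with multiplicity. For an $a$-element multiset $T$, $I_T(j)$ is the multiplicity of $j$ in $T$ and $p^C(T)=\prod_{j=1}^b\binom{n_j^C}{I_T(j)}\big/\binom{n}{a}$; and $p^C(\mathcal{T})=\sum_{T\in\mathcal{T}}p^C(T)$. For $H\in\mathcal{H}(a,n,m)$, $q(H)$ is the maximum, over all colorings $C:[n]\to[b]$, of the number of hyperedges of $H$ whose color multiset with respect to $C$ belongs to $\mathcal{T}$ (equivalently, the largest number of hyperedges in a subhypergraph of $H$ admitting a $b$-coloring in which every hyperedge's color multiset lies in $\mathcal{T}$). *)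

theory Defs
  imports Complex_Main "HOL-Library.Multiset" "HOL-Library.Landau_Symbols"
begin

definition hypergraphs :: "nat \<Rightarrow> nat \<Rightarrow> nat \<Rightarrow> nat set set set" where
  "hypergraphs a n m = {H. H \<subseteq> {e. e \<subseteq> {1..n} \<and> card e = a} \<and> card H = m}"

text \<open>Colorings [n] -> [b] (values outside [n] are irrelevant).\<close>
definition colorings :: "nat \<Rightarrow> nat \<Rightarrow> (nat \<Rightarrow> nat) set" where
  "colorings n b = {C. \<forall>v\<in>{1..n}. C v \<in> {1..b}}"

definition color_mset :: "(nat \<Rightarrow> nat) \<Rightarrow> nat set \<Rightarrow> nat multiset" where
  "color_mset C e = image_mset C (mset_set e)"

definition class_size :: "nat \<Rightarrow> (nat \<Rightarrow> nat) \<Rightarrow> nat \<Rightarrow> nat" where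
  "class_size n C j = card {v\<in>{1..n}. C v = j}"

definition pT :: "nat \<Rightarrow> nat \<Rightarrow> nat \<Rightarrow> (nat \<Rightarrow> nat) \<Rightarrow> nat multiset \<Rightarrow> real" where
  "pT a b n C T = (\<Prod>j=1..b. real (class_size n C j choose count T j)) / real (n choose a)"

definition pFam :: "nat \<Rightarrow> nat \<Rightarrow> nat \<Rightarrow> (nat \<Rightarrow> nat) \<Rightarrow> nat multiset set \<Rightarrow> real" where
  "pFam a b n C \<T> = (\<Sum>T\<in>\<T>. pT a b n C T)"

definition good_edges :: "(nat \<Rightarrow> nat) \<Rightarrow> nat multiset set \<Rightarrow> nat set set \<Rightarrow> nat" where
  "good_edges C \<T> H = card {e\<in>H. color_mset C e \<in> \<T>}"

definition q :: "nat \<Rightarrow> nat \<Rightarrow> nat multiset set \<Rightarrow> nat set set \<Rightarrow> nat" where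
  "q n b \<T> H = Max {good_edges C \<T> H | C. C \<in> colorings n b}"

end

(* Fix a colouring C and let G be the set of a-sets whose colour multiset lies in \<T>; then
   |G| <= p (n choose a) for p = p^{C_M}(\<T>).  Over all m-sets H of a-sets, the k-th binomial
   moment of |H \<inter> G| averages to at most p^k (m choose k), whereas every H with
   |H \<inter> G| > (1 + \<epsilon>) p m has (|H \<inter> G| choose k) >= ((1 + \<epsilon>/2) p)^k (m choose k) as long as
   k <= \<epsilon> p m / 2.  So C is bad for at most a (1 + \<epsilon>/2)^(-k) fraction of the hypergraphs, and
   since q(H) is attained by one of the b^n colourings a union bound over them controls q.
   A block colouring shows p >= (2a)^(-a), so k can be taken of order m, and
   b^n (1 + \<epsilon>/2)^(-k) tends to 0 because m/n tends to infinity. *)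

theory Submission
  imports Defs "HOL-Library.FuncSet"
begin

lemma count_color_mset:
  assumes "finite e"
  shows "count (color_mset C e) j = card {v\<in>e. C v = j}"
  using assms by (simp add: color_mset_def count_image_mset Int_def conj_commute)

lemma color_mset_restrict:
  assumes "e \<subseteq> I"
  shows "color_mset (restrict C I) e = color_mset C e"
proof (cases "finite e")
  case True
  then show ?thesis
    using assms unfolding color_mset_def by (intro image_mset_cong) auto
qed (simp add: color_mset_def)

definition good_sets :: "nat \<Rightarrow> nat \<Rightarrow> (nat \<Rightarrow> nat) \<Rightarrow> nat multiset set \<Rightarrow> nat set set" where
  "good_sets n a C \<T> = {e. e \<subseteq> {1..n} \<and> card e = a \<and> color_mset C e \<in> \<T>}"

lemma card_edges_with_color_mset_le:
  assumes C: "C \<in> colorings n b"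
  shows "card {e. e \<subseteq> {1..n} \<and> color_mset C e = T}
    \<le> (\<Prod>j=1..b. class_size n C j choose count T j)"
proof -
  let ?A = "{e. e \<subseteq> {1..n} \<and> color_mset C e = T}"
  define cl where "cl j = {v\<in>{1..n}. C v = j}" for j
  define fibres where "fibres e = (\<lambda>j\<in>{1..b}. {v\<in>e. C v = j})" for e :: "nat set"
  have union_fibres: "e = (\<Union>j\<in>{1..b}. fibres e j)" if "e \<subseteq> {1..n}" for e
    using that C by (fastforce simp: fibres_def colorings_def)
  have "inj_on fibres ?A"
  proof (rule inj_onI)
    fix x y assume "x \<in> ?A" "y \<in> ?A" "fibres x = fibres y"
    then show "x = y" using union_fibres[of x] union_fibres[of y] by simp
  qed
  moreover have "fibres ` ?A \<subseteq> (\<Pi>\<^sub>E j\<in>{1..b}. {S. S \<subseteq> cl j \<and> card S = count T j})"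
  proof clarify
    fix e assume e: "e \<subseteq> {1..n}" "T = color_mset C e"
    have "finite e" using e(1) by (rule finite_subset) simp
    then show "fibres e \<in> (\<Pi>\<^sub>E j\<in>{1..b}. {S. S \<subseteq> cl j \<and> card S = count (color_mset C e) j})"
      using e by (auto simp: fibres_def cl_def count_color_mset)
  qed
  ultimately have "card ?A \<le> card (\<Pi>\<^sub>E j\<in>{1..b}. {S. S \<subseteq> cl j \<and> card S = count T j})"
    by (intro card_inj_on_le) (auto simp: cl_def intro!: finite_PiE)
  also have "\<dots> = (\<Prod>j=1..b. class_size n C j choose count T j)"
    by (simp add: card_PiE n_subsets cl_def class_size_def)
  finally show ?thesis .
qed

lemma card_good_sets_le:
  assumes "C \<in> colorings n b" and "finite \<T>" and "a \<le> n"
  shows "real (card (good_sets n a C \<T>)) \<le> pFam a b n C \<T> * real (n choose a)"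
proof -
  have "good_sets n a C \<T> \<subseteq> (\<Union>T\<in>\<T>. {e. e \<subseteq> {1..n} \<and> color_mset C e = T})"
    by (auto simp: good_sets_def)
  moreover have "finite (\<Union>T\<in>\<T>. {e. e \<subseteq> {1..n} \<and> color_mset C e = T})"
    using assms(2) by (simp add: finite_Collect_subsets)
  ultimately have "card (good_sets n a C \<T>) \<le> card (\<Union>T\<in>\<T>. {e. e \<subseteq> {1..n} \<and> color_mset C e = T})"
    by (intro card_mono)
  also have "\<dots> \<le> (\<Sum>T\<in>\<T>. card {e. e \<subseteq> {1..n} \<and> color_mset C e = T})"
    using assms(2) by (rule card_UN_le)
  also have "\<dots> \<le> (\<Sum>T\<in>\<T>. \<Prod>j=1..b. class_size n C j choose count T j)"
    by (intro sum_mono card_edges_with_color_mset_le assms(1))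
  finally have "real (card (good_sets n a C \<T>))
      \<le> real (\<Sum>T\<in>\<T>. \<Prod>j=1..b. class_size n C j choose count T j)"
    by (rule of_nat_mono)
  also have "\<dots> = pFam a b n C \<T> * real (n choose a)"
    using assms(3) by (simp add: pFam_def pT_def sum_distrib_right)
  finally show ?thesis .
qed

lemma pT_nonneg: "0 \<le> pT a b n C T"
  unfolding pT_def by (intro divide_nonneg_nonneg prod_nonneg) auto

lemma pT_le_pFam:
  assumes "T \<in> \<T>" and "finite \<T>"
  shows "pT a b n C T \<le> pFam a b n C \<T>"
  unfolding pFam_def using assms by (intro member_le_sum) (auto simp: pT_nonneg)

lemma count_list_mult_le_card_block_class:
  assumes "0 < L" and "length xs * L \<le> n"
    and C: "\<And>v. (v - 1) div L < length xs \<Longrightarrow> C v = xs ! ((v - 1) div L)"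
  shows "count_list xs j * L \<le> card {v\<in>{1..n}. C v = j}"
proof -
  let ?I = "{i. i < length xs \<and> xs ! i = j}"
  let ?block = "\<lambda>(i, t). i * L + t + 1"
  have div_mod: "(i * L + t) div L = i" "(i * L + t) mod L = t" if "t < L" for i t
    using that by simp_all
  have "inj_on ?block (?I \<times> {..<L})"
    by (rule inj_onI) (clarsimp, metis div_mod)
  moreover have "?block (i, t) \<in> {v\<in>{1..n}. C v = j}" if "(i, t) \<in> ?I \<times> {..<L}" for i t
  proof -
    have "i * L + t + 1 \<le> Suc i * L" using that by simp
    also have "\<dots> \<le> length xs * L" using that by (intro mult_right_mono) auto
    finally show ?thesis
      using that assms(2) C[of "i * L + t + 1"] div_mod[of t i] by auto
  qed
  then have "?block ` (?I \<times> {..<L}) \<subseteq> {v\<in>{1..n}. C v = j}" by auto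
  ultimately have "card (?I \<times> {..<L}) \<le> card {v\<in>{1..n}. C v = j}"
    by (intro card_inj_on_le) auto
  moreover have "card ?I = count_list xs j"
    by (simp add: count_list_eq_length_filter length_filter_conv_card eq_commute)
  ultimately show ?thesis by (simp add: card_cartesian_product)
qed

lemma sum_count_eq_size:
  assumes "finite A" and "set_mset T \<subseteq> A"
  shows "(\<Sum>j\<in>A. count T j) = size T"
proof -
  have "(\<Sum>j\<in>A. count T j) = (\<Sum>j\<in>set_mset T. count T j)"
    using assms by (intro sum.mono_neutral_right) (auto simp: not_in_iff)
  then show ?thesis by (simp add: size_multiset_overloaded_eq)
qed

lemma exists_coloring_class_size_ge:
  assumes T: "size T = a" "set_mset T \<subseteq> {1..b}" and "1 \<le> a" and "a \<le> n"
  shows "\<exists>C\<in>colorings n b. \<forall>j. count T j * (n div a) \<le> class_size n C j"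
proof -
  define xs where "xs = sorted_list_of_multiset T"
  define L where "L = n div a"
  \<comment> \<open>Consecutive blocks of L vertices get the colours of T in order; the at most
    a - 1 leftover vertices get the last one.\<close>
  define C where "C v = xs ! min ((v - 1) div L) (a - 1)" for v
  have xs: "mset xs = T" "length xs = a"
    using T by (simp_all add: xs_def flip: size_mset)
  have "1 \<le> L" using assms by (simp add: L_def Suc_le_eq div_greater_zero_iff)
  have "C v \<in> set xs" for v
    unfolding C_def using xs(2) \<open>1 \<le> a\<close> by (intro nth_mem) simp
  then have "C \<in> colorings n b"
    using T(2) by (fastforce simp: colorings_def simp flip: xs(1))
  moreover have "count T j * L \<le> class_size n C j" for j
    unfolding class_size_def
    using count_list_mult_le_card_block_class[of L xs n C j] \<open>1 \<le> L\<close> xs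
    by (simp add: C_def L_def count_mset[symmetric] mult.commute[of a] div_times_less_eq_dividend)
  ultimately show ?thesis unfolding L_def by blast
qed

lemma exists_coloring_pT_ge:
  assumes T: "size T = a" "set_mset T \<subseteq> {1..b}" and "1 \<le> a" and n: "2 * a \<le> n"
  shows "\<exists>C\<in>colorings n b. (1 / (2 * real a)) ^ a \<le> pT a b n C T"
proof -
  define L where "L = n div a"
  obtain C where C: "C \<in> colorings n b" and class_ge: "\<And>j. count T j * L \<le> class_size n C j"
    using exists_coloring_class_size_ge[OF T \<open>1 \<le> a\<close>, of n] n unfolding L_def by auto
  have "1 \<le> L" using assms by (simp add: L_def Suc_le_eq div_greater_zero_iff)
  have "n \<le> 2 * a * L"
  proof -
    have "n = a * L + n mod a" by (simp add: L_def)
    moreover have "n mod a < a" using \<open>1 \<le> a\<close> by simp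
    moreover have "a \<le> a * L" using \<open>1 \<le> L\<close> by simp
    ultimately show ?thesis by linarith
  qed
  have "real L ^ count T j \<le> real (class_size n C j choose count T j)" for j
  proof (cases "count T j = 0")
    case False
    then have "real L ^ count T j = (real (count T j * L) / real (count T j)) ^ count T j"
      by simp
    also have "\<dots> \<le> real ((count T j * L) choose count T j)"
      using \<open>1 \<le> L\<close> by (intro binomial_ge_n_over_k_pow_k) simp
    also have "\<dots> \<le> real (class_size n C j choose count T j)"
      using class_ge by (simp add: binomial_right_mono)
    finally show ?thesis .
  qed simp
  then have "real L ^ (\<Sum>j=1..b. count T j) \<le> (\<Prod>j=1..b. real (class_size n C j choose count T j))"
    by (simp add: power_sum prod_mono)
  then have "real L ^ a / real (n choose a) \<le> pT a b n C T"
    using sum_count_eq_size[of "{1..b}" T] T by (simp add: pT_def divide_right_mono)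
  moreover have "(1 / (2 * real a)) ^ a \<le> (real L / real n) ^ a"
    using of_nat_mono[OF \<open>n \<le> 2 * a * L\<close>] \<open>1 \<le> a\<close> n
    by (intro power_mono) (simp_all add: field_simps)
  moreover have "(real L / real n) ^ a \<le> real L ^ a / real (n choose a)"
    using n binomial_le_pow[of a n] by (simp add: power_divide frac_le flip: of_nat_power)
  ultimately show ?thesis using C by (meson order_trans)
qed

lemma binomial_mult_power_le:
  fixes c d :: real
  assumes "k \<le> x" "k \<le> y" "0 \<le> c"
    and "\<And>i. i < k \<Longrightarrow> real (x - i) * c \<le> real (y - i) * d"
  shows "real (x choose k) * c ^ k \<le> real (y choose k) * d ^ k"
proof -
  have "real (x choose k) * c ^ k = (\<Prod>i = 0..<k. real (x - i) / real (k - i) * c)"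
    unfolding binomial_altdef_of_nat[OF assms(1)] prod.distrib by simp
  also have "\<dots> \<le> (\<Prod>i = 0..<k. real (y - i) / real (k - i) * d)"
    using assms(3,4) by (intro prod_mono conjI) (auto simp: divide_right_mono)
  also have "\<dots> = real (y choose k) * d ^ k"
    unfolding binomial_altdef_of_nat[OF assms(2)] prod.distrib by simp
  finally show ?thesis .
qed

lemma binomial_pow_le_binomial:
  fixes r :: real
  assumes "0 \<le> r" and "real k + r * real m \<le> real x" and "x \<le> m"
  shows "real (m choose k) * r ^ k \<le> real (x choose k)"
proof (cases "m = 0")
  case False
  have "0 \<le> r * real m" using assms(1) by simp
  then have "k \<le> x" using assms(2) by linarith
  have "real (m choose k) * (r * real m) ^ k \<le> real (x choose k) * real m ^ k"
  proof (rule binomial_mult_power_le)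
    fix i assume "i < k"
    have "r * real (m - i) \<le> r * real m"
      using assms(1) by (intro mult_left_mono) auto
    also have "\<dots> \<le> real (x - i)"
      using assms(2) \<open>i < k\<close> \<open>k \<le> x\<close> by (simp add: of_nat_diff)
    finally have "r * real (m - i) * real m \<le> real (x - i) * real m"
      by (intro mult_right_mono) auto
    then show "real (m - i) * (r * real m) \<le> real (x - i) * real m"
      by (simp add: ac_simps)
  qed (use assms \<open>k \<le> x\<close> in auto)
  then show ?thesis
    using False by (simp add: power_mult_distrib)
qed (use assms in simp)

lemma binomial_le_binomial_pow:
  fixes p :: real
  assumes "0 \<le> p" and "real g \<le> p * real N" and "g \<le> N"
  shows "real (g choose k) \<le> real (N choose k) * p ^ k"
proof (cases "k \<le> g \<and> 0 < N")
  case True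
  have "real (g choose k) * real N ^ k \<le> real (N choose k) * real g ^ k"
    using True assms(3)
    by (intro binomial_mult_power_le) (auto simp: of_nat_diff algebra_simps intro: mult_left_mono)
  also have "\<dots> \<le> real (N choose k) * (p * real N) ^ k"
    using assms(2) by (intro mult_left_mono power_mono) auto
  finally show ?thesis
    using True by (simp add: power_mult_distrib)
next
  case False
  then show ?thesis
    using assms by (cases k) (auto simp: binomial_eq_0)
qed

lemma card_supersets_le:
  assumes "finite E" and "K \<subseteq> E"
  shows "card {H. H \<subseteq> E \<and> card H = m \<and> K \<subseteq> H} \<le> (card E - card K) choose (m - card K)"
proof -
  have "finite K" using assms by (rule finite_subset[rotated])
  have "card {H. H \<subseteq> E \<and> card H = m \<and> K \<subseteq> H} \<le> card {S. S \<subseteq> E - K \<and> card S = m - card K}"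
  proof (rule card_inj_on_le)
    show "inj_on (\<lambda>H. H - K) {H. H \<subseteq> E \<and> card H = m \<and> K \<subseteq> H}"
    proof (rule inj_onI)
      fix H1 H2 assume "H1 \<in> {H. H \<subseteq> E \<and> card H = m \<and> K \<subseteq> H}"
        "H2 \<in> {H. H \<subseteq> E \<and> card H = m \<and> K \<subseteq> H}" "H1 - K = H2 - K"
      then have "H1 = K \<union> (H1 - K)" "H2 = K \<union> (H2 - K)" "H1 - K = H2 - K" by auto
      then show "H1 = H2" by simp
    qed
    show "(\<lambda>H. H - K) ` {H. H \<subseteq> E \<and> card H = m \<and> K \<subseteq> H} \<subseteq> {S. S \<subseteq> E - K \<and> card S = m - card K}"
      using \<open>finite K\<close> by (auto simp: card_Diff_subset)
    show "finite {S. S \<subseteq> E - K \<and> card S = m - card K}"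
      using assms(1) by (auto intro: finite_subset[of _ "Pow E"])
  qed
  also have "\<dots> = (card E - card K) choose (m - card K)"
    using assms \<open>finite K\<close> by (simp add: n_subsets card_Diff_subset)
  finally show ?thesis .
qed

lemma sum_binomial_card_Int_le:
  assumes "finite E" and "G \<subseteq> E"
  shows "(\<Sum>H | H \<subseteq> E \<and> card H = m. card (H \<inter> G) choose k)
    \<le> (card G choose k) * ((card E - k) choose (m - k))"
proof -
  let ?Hs = "{H. H \<subseteq> E \<and> card H = m}" and ?Ks = "{K. K \<subseteq> G \<and> card K = k}"
  have "finite G" using assms by (rule finite_subset[rotated])
  have fin: "finite ?Hs" "finite ?Ks"
    using assms \<open>finite G\<close> by (auto intro: finite_subset[of _ "Pow E"] finite_subset[of _ "Pow G"])
  have "(\<Sum>H\<in>?Hs. card (H \<inter> G) choose k) = (\<Sum>H\<in>?Hs. \<Sum>K\<in>?Ks. of_bool (K \<subseteq> H))"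
  proof (rule sum.cong[OF refl])
    fix H
    have "card (H \<inter> G) choose k = card {K. K \<subseteq> H \<inter> G \<and> card K = k}"
      by (rule n_subsets[symmetric]) (use \<open>finite G\<close> in simp)
    also have "{K. K \<subseteq> H \<inter> G \<and> card K = k} = ?Ks \<inter> {K. K \<subseteq> H}" by auto
    finally show "card (H \<inter> G) choose k = (\<Sum>K\<in>?Ks. of_bool (K \<subseteq> H))"
      using fin(2) by (simp add: sum_of_bool_eq)
  qed
  also have "\<dots> = (\<Sum>K\<in>?Ks. card {H. H \<subseteq> E \<and> card H = m \<and> K \<subseteq> H})"
    using fin(1) by (subst sum.swap) (simp add: sum_of_bool_eq Int_def conj_assoc)
  also have "\<dots> \<le> (\<Sum>K\<in>?Ks. (card E - k) choose (m - k))"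
  proof (rule sum_mono)
    fix K assume "K \<in> ?Ks"
    then show "card {H. H \<subseteq> E \<and> card H = m \<and> K \<subseteq> H} \<le> (card E - k) choose (m - k)"
      using card_supersets_le[OF assms(1), of K m] assms(2) by auto
  qed
  also have "\<dots> = (card G choose k) * ((card E - k) choose (m - k))"
    using \<open>finite G\<close> by (simp add: n_subsets)
  finally show ?thesis by simp
qed

lemma sum_binomial_card_Int_le_pow:
  fixes p :: real
  assumes E: "finite E" and G: "G \<subseteq> E" and dense: "real (card G) \<le> p * real (card E)"
    and "0 \<le> p" and "k \<le> m" and "m \<le> card E"
  shows "(\<Sum>H | H \<subseteq> E \<and> card H = m. real (card (H \<inter> G) choose k))
    \<le> real (card E choose m) * (real (m choose k) * p ^ k)"
proof -
  have "(\<Sum>H | H \<subseteq> E \<and> card H = m. real (card (H \<inter> G) choose k))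
      \<le> real (card G choose k) * real ((card E - k) choose (m - k))"
    using sum_binomial_card_Int_le[OF E G, where m = m and k = k]
    by (simp flip: of_nat_sum of_nat_mult)
  also have "\<dots> \<le> real (card E choose k) * p ^ k * real ((card E - k) choose (m - k))"
    using assms by (intro mult_right_mono binomial_le_binomial_pow) (auto simp: card_mono)
  also have "\<dots> = real (card E choose m) * (real (m choose k) * p ^ k)"
    using choose_mult[OF assms(5,6)] by (simp add: ac_simps flip: of_nat_mult)
  finally show ?thesis .
qed

(* Markov's inequality for the k-th binomial moment of |H \<inter> G|. *)
lemma card_subsets_large_Int_le:
  fixes p \<epsilon> :: real
  assumes E: "finite E" and G: "G \<subseteq> E" and dense: "real (card G) \<le> p * real (card E)"
    and p: "0 < p" and \<epsilon>: "0 < \<epsilon>" and k: "real k \<le> \<epsilon> * p * real m / 2"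
  shows "real (card {H. H \<subseteq> E \<and> card H = m \<and> p * real m * (1 + \<epsilon>) < real (card (H \<inter> G))})
      * (1 + \<epsilon> / 2) ^ k \<le> real (card E choose m)"
proof -
  define Bad where "Bad = {H. H \<subseteq> E \<and> card H = m \<and> p * real m * (1 + \<epsilon>) < real (card (H \<inter> G))}"
  have Int_le: "card (H \<inter> G) \<le> m" if "H \<subseteq> E" "card H = m" for H
    using that E by (metis card_mono finite_subset inf_le1)
  have margin: "real k + (1 + \<epsilon> / 2) * p * real m \<le> real (card (H \<inter> G))" if "H \<in> Bad" for H
  proof -
    have "(1 + \<epsilon> / 2) * p * real m = p * real m + \<epsilon> * p * real m / 2"
      "p * real m * (1 + \<epsilon>) = p * real m + \<epsilon> * p * real m"
      by (simp_all add: algebra_simps)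
    then show ?thesis using that k by (simp add: Bad_def)
  qed
  show ?thesis
  proof (cases "Bad = {}")
    case False
    then obtain H0 where H0: "H0 \<in> Bad" by blast
    have "0 \<le> (1 + \<epsilon> / 2) * p * real m" using p \<epsilon> by simp
    then have "k \<le> m"
      using margin[OF H0] Int_le[of H0] H0 by (simp add: Bad_def)
    have "m \<le> card E" using H0 E by (auto simp: Bad_def intro: card_mono)
    have hit: "real (m choose k) * ((1 + \<epsilon> / 2) * p) ^ k \<le> real (card (H \<inter> G) choose k)"
      if "H \<in> Bad" for H
      using that p \<epsilon> margin[OF that] Int_le
      by (intro binomial_pow_le_binomial) (simp_all add: Bad_def)
    have "real (card Bad) * (1 + \<epsilon> / 2) ^ k * (real (m choose k) * p ^ k)
        = (\<Sum>H\<in>Bad. real (m choose k) * ((1 + \<epsilon> / 2) * p) ^ k)"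
      by (simp add: power_mult_distrib ac_simps)
    also have "\<dots> \<le> (\<Sum>H\<in>Bad. real (card (H \<inter> G) choose k))"
      using hit by (rule sum_mono)
    also have "\<dots> \<le> (\<Sum>H | H \<subseteq> E \<and> card H = m. real (card (H \<inter> G) choose k))"
      using E by (intro sum_mono2) (auto simp: Bad_def intro: finite_subset[of _ "Pow E"])
    also have "\<dots> \<le> real (card E choose m) * (real (m choose k) * p ^ k)"
      using p \<open>k \<le> m\<close> \<open>m \<le> card E\<close> by (intro sum_binomial_card_Int_le_pow[OF E G dense]) auto
    finally have "real (card Bad) * (1 + \<epsilon> / 2) ^ k * (real (m choose k) * p ^ k)
        \<le> real (card E choose m) * (real (m choose k) * p ^ k)" .
    moreover have "0 < real (m choose k) * p ^ k" using \<open>k \<le> m\<close> p by simp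
    ultimately show ?thesis unfolding Bad_def by (rule mult_right_le_imp_le)
  qed (simp flip: Bad_def)
qed

lemma q_empty_family:
  assumes "1 \<le> b"
  shows "q n b {} H = 0"
  using assms unfolding q_def good_edges_def colorings_def
  by (auto intro!: Max_eqI exI[of _ "\<lambda>_. 1"])

lemma q_attained_on_restricted_coloring:
  assumes "1 \<le> b" and "\<forall>e\<in>H. e \<subseteq> {1..n}" and "finite H"
  shows "\<exists>C\<in>\<Pi>\<^sub>E v\<in>{1..n}. {1..b}. good_edges C \<T> H = q n b \<T> H"
proof -
  let ?S = "{good_edges C \<T> H | C. C \<in> colorings n b}"
  have "finite ?S"
    by (rule finite_subset[of _ "{..card H}"])
      (use assms(3) in \<open>auto simp: good_edges_def intro: card_mono\<close>)
  moreover have "(\<lambda>_. 1) \<in> colorings n b"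
    using assms(1) by (simp add: colorings_def)
  then have "?S \<noteq> {}" by blast
  ultimately have "q n b \<T> H \<in> ?S"
    unfolding q_def by (rule Max_in)
  then obtain C where C: "C \<in> colorings n b" and "good_edges C \<T> H = q n b \<T> H"
    by auto
  moreover have "good_edges (restrict C {1..n}) \<T> H = good_edges C \<T> H"
    using assms(2)
    by (auto simp: good_edges_def color_mset_restrict intro!: arg_cong[where f = card])
  moreover have "restrict C {1..n} \<in> (\<Pi>\<^sub>E v\<in>{1..n}. {1..b})"
    using C by (auto simp: colorings_def)
  ultimately show ?thesis by metis
qed

lemma hypergraphs_q_gt_subset_UN:
  assumes "1 \<le> b"
  shows "{H \<in> hypergraphs a n m. t < real (q n b \<T> H)}
    \<subseteq> (\<Union>C\<in>\<Pi>\<^sub>E v\<in>{1..n}. {1..b}. {H. H \<subseteq> {e. e \<subseteq> {1..n} \<and> card e = a} \<and> card H = m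
          \<and> t < real (card (H \<inter> good_sets n a C \<T>))})" (is "_ \<subseteq> ?U")
proof
  fix H assume H: "H \<in> {H \<in> hypergraphs a n m. t < real (q n b \<T> H)}"
  then have HE: "H \<subseteq> {e. e \<subseteq> {1..n} \<and> card e = a}" "card H = m"
    by (auto simp: hypergraphs_def)
  have "finite H"
    using HE(1) by (rule finite_subset) (simp add: finite_Collect_subsets)
  moreover have "\<forall>e\<in>H. e \<subseteq> {1..n}" using HE(1) by auto
  ultimately obtain C where C: "C \<in> (\<Pi>\<^sub>E v\<in>{1..n}. {1..b})" "good_edges C \<T> H = q n b \<T> H"
    using q_attained_on_restricted_coloring[OF assms, of H n \<T>] by auto
  have "H \<inter> good_sets n a C \<T> = {e\<in>H. color_mset C e \<in> \<T>}"
    using HE(1) by (auto simp: good_sets_def)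
  then have "t < real (card (H \<inter> good_sets n a C \<T>))"
    using H C(2) by (simp add: good_edges_def)
  then show "H \<in> ?U"
    using C(1) HE by blast
qed

lemma card_hypergraphs_q_gt_le:
  fixes p \<epsilon> :: real
  assumes "a \<le> n" and "1 \<le> b" and "finite \<T>"
    and p_max: "\<forall>C\<in>colorings n b. pFam a b n C \<T> \<le> p" and p: "0 < p"
    and \<epsilon>: "0 < \<epsilon>" and k: "real k \<le> \<epsilon> * p * real m / 2"
  shows "real (card {H \<in> hypergraphs a n m. p * real m * (1 + \<epsilon>) < real (q n b \<T> H)})
      * (1 + \<epsilon> / 2) ^ k \<le> real b ^ n * real ((n choose a) choose m)"
proof -
  define E where "E = {e. e \<subseteq> {1..n} \<and> card e = a}"
  define P where "P = (\<Pi>\<^sub>E v\<in>{1..n}. {1..b})"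
  define Bad where "Bad C = {H. H \<subseteq> E \<and> card H = m
    \<and> p * real m * (1 + \<epsilon>) < real (card (H \<inter> good_sets n a C \<T>))}" for C
  have E: "finite E" "card E = n choose a"
    by (simp_all add: E_def n_subsets finite_Collect_subsets)
  have P: "finite P" "card P = b ^ n" "P \<subseteq> colorings n b"
    by (auto simp: P_def card_PiE colorings_def intro: finite_PiE)
  have "finite (Bad C)" for C
    by (rule finite_subset[of _ "Pow E"]) (use E(1) in \<open>auto simp: Bad_def\<close>)
  moreover have "{H \<in> hypergraphs a n m. p * real m * (1 + \<epsilon>) < real (q n b \<T> H)} \<subseteq> (\<Union>C\<in>P. Bad C)"
    unfolding Bad_def E_def P_def by (rule hypergraphs_q_gt_subset_UN[OF assms(2)])
  ultimately have "card {H \<in> hypergraphs a n m. p * real m * (1 + \<epsilon>) < real (q n b \<T> H)}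
      \<le> card (\<Union>C\<in>P. Bad C)"
    using P(1) by (intro card_mono) auto
  also have "\<dots> \<le> (\<Sum>C\<in>P. card (Bad C))"
    using P(1) by (rule card_UN_le)
  finally have "real (card {H \<in> hypergraphs a n m. p * real m * (1 + \<epsilon>) < real (q n b \<T> H)})
      * (1 + \<epsilon> / 2) ^ k \<le> (\<Sum>C\<in>P. real (card (Bad C)) * (1 + \<epsilon> / 2) ^ k)"
    using \<epsilon> by (simp add: sum_distrib_right[symmetric] mult_right_mono flip: of_nat_sum)
  also have "\<dots> \<le> (\<Sum>C\<in>P. real ((n choose a) choose m))"
  proof (rule sum_mono)
    fix C assume "C \<in> P"
    then have "real (card (good_sets n a C \<T>)) \<le> pFam a b n C \<T> * real (card E)"
      unfolding E(2) using P(3) assms(1,3) card_good_sets_le by blast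
    also have "\<dots> \<le> p * real (card E)"
      using \<open>C \<in> P\<close> P(3) p_max by (intro mult_right_mono) auto
    finally have "real (card (good_sets n a C \<T>)) \<le> p * real (card E)" .
    moreover have "good_sets n a C \<T> \<subseteq> E" by (auto simp: good_sets_def E_def)
    ultimately show "real (card (Bad C)) * (1 + \<epsilon> / 2) ^ k \<le> real ((n choose a) choose m)"
      using card_subsets_large_Int_le[OF E(1) _ _ p \<epsilon> k] by (simp add: Bad_def E(2))
  qed
  also have "\<dots> = real b ^ n * real ((n choose a) choose m)"
    using P(2) by simp
  finally show ?thesis .
qed

lemma card_hypergraphs_q_gt_le_powr:
  fixes p p0 \<epsilon> :: real
  assumes "a \<le> n" and "1 \<le> b" and "finite \<T>"
    and "\<forall>C\<in>colorings n b. pFam a b n C \<T> \<le> p" and "0 < p0" "p0 \<le> p" and \<epsilon>: "0 < \<epsilon>"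
  shows "real (card {H \<in> hypergraphs a n m. p * real m * (1 + \<epsilon>) < real (q n b \<T> H)})
      \<le> real b ^ n * (1 + \<epsilon> / 2) powr (1 - \<epsilon> * p0 / 2 * real m) * real ((n choose a) choose m)"
proof -
  define x where "x = \<epsilon> * p0 / 2 * real m"
  define k where "k = nat \<lfloor>x\<rfloor>"
  have "0 \<le> x" using assms by (simp add: x_def)
  then have k: "real k \<le> x" "x \<le> real k + 1"
    using floor_correct[of x] by (simp_all add: k_def)
  have "x \<le> \<epsilon> * p / 2 * real m"
    unfolding x_def using assms(6,7) by (intro mult_right_mono mult_left_mono) auto
  then have "real k \<le> \<epsilon> * p * real m / 2" using k(1) by simp
  then have "real (card {H \<in> hypergraphs a n m. p * real m * (1 + \<epsilon>) < real (q n b \<T> H)})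
      * (1 + \<epsilon> / 2) ^ k \<le> real b ^ n * real ((n choose a) choose m)"
    using assms(5,6) by (intro card_hypergraphs_q_gt_le[OF assms(1-4) _ \<epsilon>]) auto
  then have "real (card {H \<in> hypergraphs a n m. p * real m * (1 + \<epsilon>) < real (q n b \<T> H)})
      \<le> real b ^ n * real ((n choose a) choose m) * (1 / (1 + \<epsilon> / 2) ^ k)"
    using \<epsilon> by (simp add: pos_le_divide_eq)
  also have "\<dots> \<le> real b ^ n * real ((n choose a) choose m) * (1 + \<epsilon> / 2) powr (1 - x)"
  proof (rule mult_left_mono)
    have "1 / (1 + \<epsilon> / 2) ^ k = (1 + \<epsilon> / 2) powr (- real k)"
      using \<epsilon> by (simp add: powr_minus_divide powr_realpow)
    also have "\<dots> \<le> (1 + \<epsilon> / 2) powr (1 - x)"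
      using k(2) \<epsilon> by (intro powr_mono) auto
    finally show "1 / (1 + \<epsilon> / 2) ^ k \<le> (1 + \<epsilon> / 2) powr (1 - x)" .
  qed simp
  finally show ?thesis by (simp add: x_def ac_simps)
qed

lemma geometric_decay_tendsto_zero:
  fixes r \<delta> B :: real
  assumes mn: "filterlim (\<lambda>n. real (m n) / real n) at_top sequentially"
    and r: "1 < r" and \<delta>: "0 < \<delta>" and B: "0 < B"
  shows "(\<lambda>n. B ^ n * r powr (1 - \<delta> * real (m n))) \<longlonglongrightarrow> 0"
proof (rule tendsto_sandwich[where f = "\<lambda>_. 0" and h = "\<lambda>n. r * exp (- real n)"])
  define M where "M = (ln B + 1) / (\<delta> * ln r)"
  have "0 < \<delta> * ln r" using r \<delta> by simp
  have "\<forall>\<^sub>F n in sequentially. M \<le> real (m n) / real n"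
    using mn by (simp add: filterlim_at_top)
  then show "\<forall>\<^sub>F n in sequentially. B ^ n * r powr (1 - \<delta> * real (m n)) \<le> r * exp (- real n)"
    using eventually_gt_at_top[of 0]
  proof eventually_elim
    case (elim n)
    then have "M * real n \<le> real (m n)" by (simp add: field_simps)
    then have "\<delta> * ln r * (M * real n) \<le> \<delta> * ln r * real (m n)"
      using \<open>0 < \<delta> * ln r\<close> by (intro mult_left_mono) auto
    then have "(ln B + 1) * real n \<le> \<delta> * ln r * real (m n)"
      using \<delta> ln_gt_zero[OF r] by (simp add: M_def)
    then have "real n * ln B - \<delta> * real (m n) * ln r \<le> - real n"
      by (simp add: algebra_simps)
    moreover have "B ^ n * r powr (1 - \<delta> * real (m n))
        = r * exp (real n * ln B - \<delta> * real (m n) * ln r)"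
      using B r by (simp add: powr_def exp_diff exp_of_nat_mult algebra_simps)
    ultimately show ?case using r by simp
  qed
  show "(\<lambda>n. r * exp (- real n)) \<longlonglongrightarrow> 0"
    by (intro tendsto_mult_right_zero filterlim_compose[OF exp_at_bot])
      (simp add: filterlim_uminus_at_bot filterlim_real_sequentially)
qed (use B in auto)

lemma smallo_of_bound_with_geometric_decay:
  fixes f g :: "nat \<Rightarrow> real" and r \<delta> B :: real
  assumes mn: "filterlim (\<lambda>n. real (m n) / real n) at_top sequentially"
    and r: "1 < r" and \<delta>: "0 < \<delta>" and B: "0 < B" and f: "\<forall>n. 0 \<le> f n"
    and bound: "\<forall>\<^sub>F n in sequentially. f n \<le> B ^ n * r powr (1 - \<delta> * real (m n)) * g n"
  shows "f \<in> o(g)"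
proof (rule landau_o.smallI)
  fix c :: real assume "0 < c"
  then have "\<forall>\<^sub>F n in sequentially. B ^ n * r powr (1 - \<delta> * real (m n)) < c"
    using geometric_decay_tendsto_zero[OF mn r \<delta> B] by (intro order_tendstoD(2)) auto
  then show "\<forall>\<^sub>F n in sequentially. norm (f n) \<le> c * norm (g n)"
    using bound
  proof eventually_elim
    case (elim n)
    have "0 < B ^ n * r powr (1 - \<delta> * real (m n))" using B r by simp
    moreover have "0 \<le> B ^ n * r powr (1 - \<delta> * real (m n)) * g n"
      using elim(2) f by (meson order_trans)
    ultimately have "0 \<le> g n" by (simp add: zero_le_mult_iff)
    then have "f n \<le> c * g n"
      using elim mult_right_mono[of _ c "g n"] by (meson less_imp_le order_trans)
    then show ?case using f \<open>0 \<le> g n\<close> by simp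
  qed
qed

theorem lemma12:
  fixes a b :: nat and \<epsilon> :: real and \<T> :: "nat multiset set"
    and m :: "nat \<Rightarrow> nat" and CM :: "nat \<Rightarrow> nat \<Rightarrow> nat"
  assumes "a \<ge> 2" and "b \<ge> 2" and "\<epsilon> > 0"
    and "\<forall>T\<in>\<T>. size T = a \<and> set_mset T \<subseteq> {1..b}"
    and "filterlim (\<lambda>n. real (m n) / real n) at_top sequentially"
    and "\<forall>n. CM n \<in> colorings n b \<and>
              (\<forall>C\<in>colorings n b. pFam a b n C \<T> \<le> pFam a b n (CM n) \<T>)"
  shows "(\<lambda>n. real (card {H \<in> hypergraphs a n (m n).
              real (q n b \<T> H) > pFam a b n (CM n) \<T> * real (m n) * (1 + \<epsilon>)}))
         \<in> o(\<lambda>n. real ((n choose a) choose (m n)))"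
proof (cases "\<T> = {}")
  case True
  then show ?thesis using assms(2) by (simp add: q_empty_family pFam_def)
next
  case False
  then obtain T0 where T0: "T0 \<in> \<T>" by blast
  have "finite \<T>"
    using assms(4) by (intro finite_subset[OF _ finite_multisets_of_size[of "{1..b}" a]])
      (auto simp: multisets_of_size_def)
  define p0 where "p0 = (1 / (2 * real a)) ^ a"
  have "0 < p0" using assms(1) by (simp add: p0_def)
  have p0_le: "p0 \<le> pFam a b n (CM n) \<T>" if n: "2 * a \<le> n" for n
  proof -
    obtain C where "C \<in> colorings n b" "p0 \<le> pT a b n C T0"
      using exists_coloring_pT_ge[of T0 a b n] T0 assms(1,4) n by (auto simp: p0_def)
    then show ?thesis using pT_le_pFam[OF T0 \<open>finite \<T>\<close>] assms(6) by (meson order_trans)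
  qed
  have "\<forall>\<^sub>F n in sequentially. real (card {H \<in> hypergraphs a n (m n).
              real (q n b \<T> H) > pFam a b n (CM n) \<T> * real (m n) * (1 + \<epsilon>)})
      \<le> real b ^ n * (1 + \<epsilon> / 2) powr (1 - \<epsilon> * p0 / 2 * real (m n)) * real ((n choose a) choose m n)"
    using eventually_ge_at_top[of "2 * a"]
    by eventually_elim
      (rule card_hypergraphs_q_gt_le_powr, use assms \<open>finite \<T>\<close> \<open>0 < p0\<close> p0_le in auto)
  then show ?thesis
    by (rule smallo_of_bound_with_geometric_decay[OF assms(5), rotated 4])
      (use assms(2,3) \<open>0 < p0\<close> in auto)
qed

end
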